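(* Let $p,q,r\in\mathrm{sylv}_\infty$ with $\mathrm{ev}(p)=\mathrm{ev}(q)\leqslant\mathrm{ev}(r)$. Then $pr=qr$ in $\mathrm{sylv}_\infty$.
   Context: Let $\mathcal{A}=\{1<2<3<\cdots\}$. A right strict binary search tree is a labelled rooted binary tree (labels in $\mathcal{A}$) in which each node's label is $\ge$ every label in its left subtree and $<$ every label in its right subtree. Inserting $a$ into such a tree $T$: if $T$ is empty, create a node labelled $a$; otherwise, with root label $x$, recursively insert $a$ into the right subtree if $a>x$ and into the left subtree otherwise. For $w=w_1\cdots w_k\in\mathcal{A}^*$, $\mathrm{P}(w)$ is obtained from the empty tree by inserting $w_k,\dots,w_1$ in this order. The sylvester monoid $\mathrm{sylv}_\infty$ is $\mathcal{A}^*/{\equiv}$ where $u\equiv v\iff \mathrm{P}(u)=\mathrm{P}(v)$ (a congruence). The evaluation $\mathrm{ev}(u)$ of a word $u$ is the tuple $(|u|_a)_{a\in\mathcal{A}}$, $|u|_a$ being the number of occurrences of $a$ in $u$; equivalent words have the same evaluation, so $\mathrm{ev}$ is defined on $\mathrm{sylv}_\infty$. $\mathrm{ev}(u)\leqslant\mathrm{ev}(v)$ means $|u|_a\le|v|_a$ for every $a$. *)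

theory Defs
  imports "HOL-Library.Tree"
begin

text \<open>Alphabet A = {1 < 2 < 3 < ...}, represented by positive naturals.
  Right strict binary search tree insertion.\<close>

fun bst_insert :: "nat \<Rightarrow> nat tree \<Rightarrow> nat tree" where
  "bst_insert a Leaf = Node Leaf a Leaf"
| "bst_insert a (Node l x r) =
     (if a > x then Node l x (bst_insert a r) else Node (bst_insert a l) x r)"

definition P_sylv :: "nat list \<Rightarrow> nat tree" where
  "P_sylv w = fold bst_insert (rev w) Leaf"

text \<open>Sylvester congruence: u and v represent the same element of sylv_infinity.\<close>
definition sylv_equiv :: "nat list \<Rightarrow> nat list \<Rightarrow> bool" where
  "sylv_equiv u v \<longleftrightarrow> P_sylv u = P_sylv v"

definition ev :: "nat list \<Rightarrow> nat \<Rightarrow> nat" where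
  "ev u = (\<lambda>a. count_list u a)"

end

theory Submission
  imports Defs "HOL-Library.Multiset"
begin

text \<open>A letter inserted into a right strict binary search tree ends at the leaf determined by
  the labels of the tree between which it falls. Two distinct letters separated by a label of
  the tree therefore end at different leaves, and inserting them in either order gives the same
  tree; this applies in particular to any two letters already present in the tree. Since
  \<open>P(p r)\<close> is obtained by inserting the letters of \<open>p\<close> into \<open>P(r)\<close>, which already contains each of
  them, the order of these insertions is irrelevant and only the multiset of letters of \<open>p\<close>
  counts.\<close>

lemma set_tree_bst_insert [simp]: "set_tree (bst_insert a t) = insert a (set_tree t)"
  by (induction t) auto

lemma bst_wrt_le_bst_insert: "bst_wrt (\<le>) t \<Longrightarrow> bst_wrt (\<le>) (bst_insert a t)"
  by (induction t) auto

lemma bst_insert_commute_if_separated: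
  assumes "bst_wrt (\<le>) t" and "v \<in> set_tree t" and "a \<le> v" and "v < b"
  shows "bst_insert a (bst_insert b t) = bst_insert b (bst_insert a t)"
  using assms
proof (induction t)
  case Leaf
  then show ?case by simp
next
  case (Node l x r)
  consider "x < a" | "a \<le> x" "x < b" | "b \<le> x"
    using \<open>a \<le> v\<close> \<open>v < b\<close> by linarith
  then show ?case
  proof cases
    case 1
    then have "v \<in> set_tree r" using Node.prems by auto
    then show ?thesis using 1 Node by auto
  next
    case 2
    then show ?thesis by simp
  next
    case 3
    then have "v \<in> set_tree l" using Node.prems by auto
    then show ?thesis using 3 Node by auto
  qed
qed

lemma bst_insert_commute_if_mem:
  assumes "bst_wrt (\<le>) t" and "a \<in> set_tree t" and "b \<in> set_tree t"
  shows "bst_insert a (bst_insert b t) = bst_insert b (bst_insert a t)"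
  using bst_insert_commute_if_separated[OF assms(1)] assms(2,3)
  by (cases a b rule: linorder_cases) (blast, simp, metis order_refl)

lemma set_tree_fold_bst_insert: "set_tree (fold bst_insert xs t) = set xs \<union> set_tree t"
  by (induction xs arbitrary: t) auto

lemma bst_wrt_le_fold_bst_insert: "bst_wrt (\<le>) t \<Longrightarrow> bst_wrt (\<le>) (fold bst_insert xs t)"
  by (induction xs arbitrary: t) (auto simp: bst_wrt_le_bst_insert)

lemma fold_bst_insert_commute:
  assumes "bst_wrt (\<le>) t" and "x \<in> set_tree t" and "set ys \<subseteq> set_tree t"
  shows "fold bst_insert ys (bst_insert x t) = bst_insert x (fold bst_insert ys t)"
  using assms
proof (induction ys arbitrary: t)
  case Nil
  then show ?case by simp
next
  case (Cons y ys)
  have "fold bst_insert (y # ys) (bst_insert x t) = fold bst_insert ys (bst_insert y (bst_insert x t))"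
    by simp
  also have "\<dots> = fold bst_insert ys (bst_insert x (bst_insert y t))"
    using bst_insert_commute_if_mem Cons.prems by auto
  also have "\<dots> = bst_insert x (fold bst_insert ys (bst_insert y t))"
    using Cons.IH[of "bst_insert y t"] Cons.prems bst_wrt_le_bst_insert by auto
  finally show ?case by simp
qed

lemma fold_bst_insert_mset_eq:
  assumes "bst_wrt (\<le>) t" and "set xs \<subseteq> set_tree t" and "mset xs = mset ys"
  shows "fold bst_insert xs t = fold bst_insert ys t"
  using assms
proof (induction xs arbitrary: ys t)
  case Nil
  then show ?case by simp
next
  case (Cons x xs)
  have "x \<in> set ys" using Cons.prems(3) by (metis list.set_intros(1) set_mset_mset)
  then obtain ys1 ys2 where ys: "ys = ys1 @ x # ys2" by (meson split_list)
  have "set ys1 \<subseteq> set_tree t" using Cons.prems ys by (metis le_sup_iff set_append set_mset_mset)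
  have "fold bst_insert (x # xs) t = fold bst_insert xs (bst_insert x t)" by simp
  also have "\<dots> = fold bst_insert (ys1 @ ys2) (bst_insert x t)"
    using Cons.IH[of "bst_insert x t" "ys1 @ ys2"] Cons.prems bst_wrt_le_bst_insert ys by auto
  also have "\<dots> = fold bst_insert ys2 (fold bst_insert ys1 (bst_insert x t))" by simp
  also have "\<dots> = fold bst_insert ys2 (bst_insert x (fold bst_insert ys1 t))"
    using fold_bst_insert_commute \<open>set ys1 \<subseteq> set_tree t\<close> Cons.prems by auto
  also have "\<dots> = fold bst_insert ys t" using ys by simp
  finally show ?case .
qed

lemma set_tree_P_sylv: "set_tree (P_sylv w) = set w"
  by (simp add: P_sylv_def set_tree_fold_bst_insert)

lemma bst_wrt_le_P_sylv: "bst_wrt (\<le>) (P_sylv w)"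
  by (simp add: P_sylv_def bst_wrt_le_fold_bst_insert)

lemma P_sylv_append: "P_sylv (u @ w) = fold bst_insert (rev u) (P_sylv w)"
  by (simp add: P_sylv_def)

lemma P_sylv_append_mset_eq:
  assumes "mset u = mset v" and "set u \<subseteq> set w"
  shows "P_sylv (u @ w) = P_sylv (v @ w)"
  unfolding P_sylv_append
  by (rule fold_bst_insert_mset_eq) (use assms in \<open>simp_all add: bst_wrt_le_P_sylv set_tree_P_sylv\<close>)

theorem lemma4p4:
  fixes p q r :: "nat list"
  assumes "\<forall>a\<in>set p. a \<ge> 1" and "\<forall>a\<in>set q. a \<ge> 1" and "\<forall>a\<in>set r. a \<ge> 1"
    and "ev p = ev q"
    and "\<forall>a. ev q a \<le> ev r a"
  shows "sylv_equiv (p @ r) (q @ r)"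
proof -
  have mset_eq: "mset p = mset q"
    using assms(4) by (simp add: multiset_eq_iff count_mset ev_def)
  have "set p \<subseteq> set r"
  proof
    fix a assume "a \<in> set p"
    then have "0 < count_list q a"
      using assms(4) by (metis count_list_0_iff ev_def neq0_conv)
    then show "a \<in> set r"
      using assms(5) by (metis count_list_0_iff ev_def le_zero_eq neq0_conv)
  qed
  then show ?thesis
    using P_sylv_append_mset_eq mset_eq by (simp add: sylv_equiv_def)
qed

end
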